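(* Let $\mathcal S\subseteq\mathcal X\cup\mathcal Y\cup\mathcal Z$ be a set of items with $w_Z(\mathcal S)\le t-1$ and $p_Z(\mathcal S)\ge t-1$. Then there exists $i\in\{0,\dots,t-1\}$ such that $\mathcal S\cap\mathcal Z=\mathcal Z_i$.
   Context: Let $n\ge1$, $B_n=\sum_{j=1}^{3n}(3n+1)^j$, $\widetilde{\mathcal A}_n=\{(3n+1)^{j_1}+(3n+1)^{j_2}+(3n+1)^{j_3}: j_1,j_2,j_3\in\{1,\dots,3n\}\}$. Let $t$ be a power of two, $\lg$ the base-2 logarithm, and for $i\in\{0,\dots,t-1\}$ let $\mathcal A_i=\{a^i_1,\dots,a^i_{3n}\}$ be a set of $3n$ integers from $\widetilde{\mathcal A}_n$ with sum $3B_n$. Let $X=3tnB_n$, $B=B_n+nX$, $Y=3t^2nB$, $Z=(\lg t)^2Y^2 3^{(\lg t)^2}$, and fix a bijection $f:\{0,\dots,\lg t-1\}^2\to\{0,\dots,(\lg t)^2-1\}$. Items (weight $w$, profit $p$): encoding items $x^i_j$ ($0\le i\le t-1$, $1\le j\le 3n$) with $w=X+a^i_j$, $p=X+a^i_j+3iB$, forming $\mathcal X$; quadratization items forming $\mathcal Y$: for $0\le k<\ell\le\lg t-1$, $y^{1,0}_{k,\ell}$ with $w=p=3^{f(k,\ell)}Y$, $y^{0,1}_{k,\ell}$ with $w=p=3^{f(\ell,k)}Y$, $y^{1,1}_{k,\ell}$ with $w=(3^{f(k,\ell)}+3^{f(\ell,k)})Y$, $p=w+2^{k+\ell}\cdot9nB$,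 and for $0\le k\le\lg t-1$, $y^{1,1}_{k,k}$ with $w=3^{f(k,k)}Y$, $p=w+2^{2k}\cdot4.5nB+2^k\cdot1.5nB$; index items forming $\mathcal Z$: for $0\le k\le\lg t-1$, $z^0_k$ with $w=p=2^kZ+\sum_{\ell=0}^{\lg t-1}3^{f(k,\ell)}Y$ and $z^1_k$ with $w=p=2^kZ+2^k\cdot 3B$. For an item $x$, $w_Z(x)=\lfloor w(x)/Z\rfloor$ and $p_Z(x)=\lfloor p(x)/Z\rfloor$; for a set $\mathcal S$, $w_Z(\mathcal S)=\sum_{x\in\mathcal S}w_Z(x)$ and $p_Z(\mathcal S)=\sum_{x\in\mathcal S}p_Z(x)$. For $i\in\{0,\dots,t-1\}$ with binary digits $i(0),\dots,i(\lg t-1)$ (so $i=\sum_k i(k)2^k$), $\mathcal Z_i=\{z^{i(k)}_k: 0\le k\le\lg t-1\}$. *)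

theory Defs
  imports Complex_Main
begin

text \<open>Items of the reduction. lg t is represented by L with t = 2^L.
  Zit d k stands for z^d_k (d in {0,1}).  Y11 k k is the diagonal item y^{1,1}_{k,k}.\<close>

datatype item = Xit nat nat | Y10 nat nat | Y01 nat nat | Y11 nat nat | Zit nat nat

definition Bn :: "nat \<Rightarrow> nat" where
  "Bn n = (\<Sum>j=1..3*n. (3*n+1)^j)"

definition Atilde :: "nat \<Rightarrow> nat set" where
  "Atilde n = {(3*n+1)^j1 + (3*n+1)^j2 + (3*n+1)^j3 | j1 j2 j3.
      j1 \<in> {1..3*n} \<and> j2 \<in> {1..3*n} \<and> j3 \<in> {1..3*n}}"

definition Xc :: "nat \<Rightarrow> nat \<Rightarrow> real" where
  "Xc n t = 3 * t * n * Bn n"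

definition Bc :: "nat \<Rightarrow> nat \<Rightarrow> real" where
  "Bc n t = Bn n + n * Xc n t"

definition Yc :: "nat \<Rightarrow> nat \<Rightarrow> real" where
  "Yc n t = 3 * t^2 * n * Bc n t"

definition Zc :: "nat \<Rightarrow> nat \<Rightarrow> nat \<Rightarrow> real" where
  "Zc n t L = L^2 * (Yc n t)^2 * 3^(L^2)"

fun wt :: "nat \<Rightarrow> nat \<Rightarrow> nat \<Rightarrow> (nat \<Rightarrow> nat \<Rightarrow> nat) \<Rightarrow> (nat \<Rightarrow> nat \<Rightarrow> nat) \<Rightarrow> item \<Rightarrow> real" where
  "wt n t L a f (Xit i j) = Xc n t + a i j"
| "wt n t L a f (Y10 k l) = 3^(f k l) * Yc n t"
| "wt n t L a f (Y01 k l) = 3^(f l k) * Yc n t"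
| "wt n t L a f (Y11 k l) =
     (if k = l then 3^(f k k) * Yc n t else (3^(f k l) + 3^(f l k)) * Yc n t)"
| "wt n t L a f (Zit d k) =
     (if d = 0 then 2^k * Zc n t L + (\<Sum>l<L. 3^(f k l) * Yc n t)
      else 2^k * Zc n t L + 2^k * 3 * Bc n t)"

fun pr :: "nat \<Rightarrow> nat \<Rightarrow> nat \<Rightarrow> (nat \<Rightarrow> nat \<Rightarrow> nat) \<Rightarrow> (nat \<Rightarrow> nat \<Rightarrow> nat) \<Rightarrow> item \<Rightarrow> real" where
  "pr n t L a f (Xit i j) = Xc n t + a i j + 3 * i * Bc n t"
| "pr n t L a f (Y10 k l) = wt n t L a f (Y10 k l)"
| "pr n t L a f (Y01 k l) = wt n t L a f (Y01 k l)"
| "pr n t L a f (Y11 k l) =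
     (if k = l then wt n t L a f (Y11 k l) + 2^(2*k) * 4.5 * n * Bc n t + 2^k * 1.5 * n * Bc n t
      else wt n t L a f (Y11 k l) + 2^(k+l) * 9 * n * Bc n t)"
| "pr n t L a f (Zit d k) = wt n t L a f (Zit d k)"

definition wZ :: "nat \<Rightarrow> nat \<Rightarrow> nat \<Rightarrow> (nat \<Rightarrow> nat \<Rightarrow> nat) \<Rightarrow> (nat \<Rightarrow> nat \<Rightarrow> nat) \<Rightarrow> item set \<Rightarrow> int" where
  "wZ n t L a f S = (\<Sum>x\<in>S. \<lfloor>wt n t L a f x / Zc n t L\<rfloor>)"

definition pZ :: "nat \<Rightarrow> nat \<Rightarrow> nat \<Rightarrow> (nat \<Rightarrow> nat \<Rightarrow> nat) \<Rightarrow> (nat \<Rightarrow> nat \<Rightarrow> nat) \<Rightarrow> item set \<Rightarrow> int" where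
  "pZ n t L a f S = (\<Sum>x\<in>S. \<lfloor>pr n t L a f x / Zc n t L\<rfloor>)"

definition Xset :: "nat \<Rightarrow> nat \<Rightarrow> item set" where
  "Xset n t = {Xit i j | i j. i < t \<and> j \<in> {1..3*n}}"

definition Yset :: "nat \<Rightarrow> item set" where
  "Yset L = {Y10 k l | k l. k < l \<and> l < L} \<union> {Y01 k l | k l. k < l \<and> l < L}
           \<union> {Y11 k l | k l. k \<le> l \<and> l < L}"

definition Zset :: "nat \<Rightarrow> item set" where
  "Zset L = {Zit d k | d k. d \<in> {0,1} \<and> k < L}"

definition Zi :: "nat \<Rightarrow> nat \<Rightarrow> item set" where
  "Zi L i = {Zit (i div 2^k mod 2) k | k. k < L}"

end

theory Submission
  imports Defs
begin

text \<open>Choosing Z huge makes the floored weight and profit of every encoding and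
  quadratization item vanish, while both index items z^0_k and z^1_k contribute exactly 2^k
  (all remainders stay below Z). Hence wZ(S) = pZ(S) = sum_k c_k 2^k, where c_k in {0,1,2}
  counts the chosen index items of bit k. The two hypotheses force this sum to be t - 1 =
  2^(lg t) - 1, and comparing parities from the lowest digit upwards gives c_k = 1 for all k:
  exactly one of z^0_k, z^1_k is chosen, and these choices are the binary digits of i.\<close>

lemma digits_eq_1_if_sum_eq_mask:
  fixes c :: "nat \<Rightarrow> nat"
  assumes "\<And>k. c k \<le> 2" and "(\<Sum>k<L. c k * 2^k) + 1 = 2^L" and "k < L"
  shows "c k = 1"
  using assms
proof (induction L arbitrary: c k)
  case 0
  then show ?case by simp
next
  case (Suc L)
  have "(\<Sum>k<Suc L. c k * 2^k) = c 0 + 2 * (\<Sum>k<L. c (Suc k) * 2^k)"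
    by (subst sum.lessThan_Suc_shift) (simp add: sum_distrib_left mult.assoc mult.left_commute)
  with Suc.prems(2) have sum: "c 0 + 2 * (\<Sum>k<L. c (Suc k) * 2^k) + 1 = 2 * 2^L"
    by simp
  then have c0: "c 0 = 1"
    using Suc.prems(1)[of 0] by presburger
  with sum have tail: "(\<Sum>k<L. c (Suc k) * 2^k) + 1 = 2^L"
    by simp
  show ?case
  proof (cases k)
    case 0
    with c0 show ?thesis by simp
  next
    case (Suc k')
    with Suc.prems(3) have "k' < L" by simp
    with Suc.IH[of "\<lambda>k. c (Suc k)" k'] Suc.prems(1) tail show ?thesis
      by (simp add: \<open>k = Suc k'\<close>)
  qed
qed

lemma floor_divide_eqI:
  fixes w z :: real
  assumes "0 < z" and "of_int m * z \<le> w" and "w < (of_int m + 1) * z"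
  shows "\<lfloor>w / z\<rfloor> = m"
  using assms by (simp add: floor_eq_iff field_simps)

lemma Atilde_le_3_Bn: "x \<in> Atilde n \<Longrightarrow> x \<le> 3 * Bn n"
proof -
  have le: "(3*n+1)^j \<le> Bn n" if "j \<in> {1..3*n}" for j
    unfolding Bn_def by (rule member_le_sum) (use that in auto)
  assume "x \<in> Atilde n"
  then obtain j1 j2 j3 where "x = (3*n+1)^j1 + (3*n+1)^j2 + (3*n+1)^j3"
    and "j1 \<in> {1..3*n}" "j2 \<in> {1..3*n}" "j3 \<in> {1..3*n}"
    unfolding Atilde_def by blast
  with le[of j1] le[of j2] le[of j3] show ?thesis
    by linarith
qed

lemma Bn_ge_1: "n \<ge> 1 \<Longrightarrow> Bn n \<ge> 1"
  unfolding Bn_def by (rule order_trans[OF _ member_le_sum[of 1]]) auto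

lemma finite_Xset: "finite (Xset n t)"
proof -
  have "Xset n t = (\<lambda>(i, j). Xit i j) ` ({..<t} \<times> {1..3*n})"
    by (auto simp: Xset_def)
  then show ?thesis by simp
qed

lemma finite_Yset: "finite (Yset L)"
proof -
  have "Yset L \<subseteq> (\<lambda>(k, l). Y10 k l) ` ({..<L} \<times> {..<L})
      \<union> (\<lambda>(k, l). Y01 k l) ` ({..<L} \<times> {..<L})
      \<union> (\<lambda>(k, l). Y11 k l) ` ({..<L} \<times> {..<L})"
    by (auto simp: Yset_def)
  then show ?thesis by (rule finite_subset) auto
qed

lemma Zset_eq: "Zset L = Zit 0 ` {..<L} \<union> Zit 1 ` {..<L}"
  by (auto simp: Zset_def)

lemma finite_Zset: "finite (Zset L)"
  by (simp add: Zset_eq)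

definition zcount :: "item set \<Rightarrow> nat \<Rightarrow> nat" where
  "zcount S k = of_bool (Zit 0 k \<in> S) + of_bool (Zit 1 k \<in> S)"

lemma zcount_le_2: "zcount S k \<le> 2"
  by (simp add: zcount_def)

lemma sum_Int_Zset:
  fixes g :: "item \<Rightarrow> 'a::comm_semiring_1"
  assumes "\<And>d k. d \<in> {0, 1} \<Longrightarrow> k < L \<Longrightarrow> g (Zit d k) = h k"
  shows "(\<Sum>x\<in>S \<inter> Zset L. g x) = (\<Sum>k<L. of_nat (zcount S k) * h k)"
proof -
  have reindex: "(\<Sum>x\<in>Zit d ` {..<L}. if x \<in> S then g x else 0)
      = (\<Sum>k<L. if Zit d k \<in> S then h k else 0)"
    if "d \<in> {0, 1}" for d
    using assms[OF that] by (subst sum.reindex) (auto simp: inj_on_def intro!: sum.cong)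
  have "(\<Sum>x\<in>S \<inter> Zset L. g x) = (\<Sum>x\<in>Zset L. if x \<in> S then g x else 0)"
    by (subst Int_commute, rule sum.inter_restrict[OF finite_Zset])
  also have "\<dots> = (\<Sum>x\<in>Zit 0 ` {..<L}. if x \<in> S then g x else 0)
      + (\<Sum>x\<in>Zit 1 ` {..<L}. if x \<in> S then g x else 0)"
    unfolding Zset_eq by (rule sum.union_disjoint) auto
  also have "\<dots> = (\<Sum>k<L. if Zit 0 k \<in> S then h k else 0)
      + (\<Sum>k<L. if Zit 1 k \<in> S then h k else 0)"
    by (simp add: reindex)
  also have "\<dots> = (\<Sum>k<L. of_nat (zcount S k) * h k)"
    by (auto simp: zcount_def distrib_right of_bool_def simp flip: sum.distrib intro!: sum.cong)
  finally show ?thesis .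
qed

lemma sum_eq_sum_zcount:
  fixes g :: "item \<Rightarrow> 'a::comm_semiring_1"
  assumes "finite S" and "S \<subseteq> A \<union> Zset L" and "\<And>x. x \<in> A \<Longrightarrow> g x = 0"
    and "\<And>d k. d \<in> {0, 1} \<Longrightarrow> k < L \<Longrightarrow> g (Zit d k) = h k"
  shows "(\<Sum>x\<in>S. g x) = (\<Sum>k<L. of_nat (zcount S k) * h k)"
proof -
  have "(\<Sum>x\<in>S - Zset L. g x) = 0"
    using assms(2,3) by (intro sum.neutral) auto
  then have "(\<Sum>x\<in>S. g x) = (\<Sum>x\<in>S \<inter> Zset L. g x)"
    using sum.Int_Diff[OF assms(1), of g "Zset L"] by simp
  also have "\<dots> = (\<Sum>k<L. of_nat (zcount S k) * h k)"
    using assms(4) by (rule sum_Int_Zset)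
  finally show ?thesis .
qed

lemma horner_sum_of_bool_digit:
  "k < L \<Longrightarrow> horner_sum of_bool 2 (map P [0..<L]) div 2^k mod (2::nat) = of_bool (P k)"
  by (simp flip: of_bool_odd_eq_mod_2 bit_iff_odd add: bit_horner_sum_bit_iff)

lemma Int_Zset_eq_Zi:
  assumes "\<And>k. k < L \<Longrightarrow> zcount S k = 1"
  shows "S \<inter> Zset L = Zi L (horner_sum of_bool 2 (map (\<lambda>k. Zit 1 k \<in> S) [0..<L]))"
proof -
  define i :: nat where "i = horner_sum of_bool 2 (map (\<lambda>k. Zit 1 k \<in> S) [0..<L])"
  have digit: "i div 2^k mod 2 = of_bool (Zit 1 k \<in> S)" if "k < L" for k
    unfolding i_def using that by (rule horner_sum_of_bool_digit)
  have one: "Zit 0 k \<in> S \<longleftrightarrow> Zit 1 k \<notin> S" if "k < L" for k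
    using assms[OF that] unfolding zcount_def
    by (cases "Zit 0 k \<in> S"; cases "Zit 1 k \<in> S") simp_all
  have "S \<inter> Zset L = Zi L i"
  proof (intro equalityI subsetI)
    fix x
    assume "x \<in> S \<inter> Zset L"
    then obtain d k where "x = Zit d k" "d \<in> {0, 1}" "k < L" "Zit d k \<in> S"
      by (auto simp: Zset_def)
    with one[of k] digit[of k] show "x \<in> Zi L i"
      unfolding Zi_def by auto
  next
    fix x
    assume "x \<in> Zi L i"
    then obtain k where "x = Zit (i div 2^k mod 2) k" "k < L"
      unfolding Zi_def by blast
    with one[of k] digit[of k] show "x \<in> S \<inter> Zset L"
      by (cases "Zit 1 k \<in> S") (auto simp: Zset_def)
  qed
  then show ?thesis
    by (simp add: i_def)
qed

locale reduction =
  fixes n t L :: nat and a f :: "nat \<Rightarrow> nat \<Rightarrow> nat"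
  assumes n_ge_1: "n \<ge> 1"
    and t_eq: "t = 2^L"
    and L_ge_1: "L \<ge> 1"
    and a_in_Atilde: "\<And>i j. i < t \<Longrightarrow> j \<in> {1..3*n} \<Longrightarrow> a i j \<in> Atilde n"
    and f_less: "\<And>k l. k < L \<Longrightarrow> l < L \<Longrightarrow> f k l < L^2"
begin

abbreviation "X \<equiv> Xc n t"
abbreviation "B \<equiv> Bc n t"
abbreviation "Y \<equiv> Yc n t"
abbreviation "Z \<equiv> Zc n t L"
abbreviation "K \<equiv> (3::real)^(L^2)"

lemma t_ge_2: "real t \<ge> 2"
proof -
  have "(2::real)^1 \<le> 2^L"
    using L_ge_1 by (intro power_increasing) auto
  then show ?thesis
    using t_eq by simp
qed

lemma two_pow_le_t: "k < L \<Longrightarrow> (2::real)^k \<le> t"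
proof -
  assume "k < L"
  then have "(2::nat)^k \<le> 2^L"
    by (intro power_increasing) auto
  then show ?thesis
    using t_eq by (metis of_nat_le_iff of_nat_numeral of_nat_power)
qed

lemma X_nonneg: "X \<ge> 0"
  by (simp add: Xc_def)

lemma X_le_B: "X \<le> B"
proof -
  have "1 * X \<le> real n * X"
    using n_ge_1 X_nonneg by (intro mult_right_mono) auto
  then show ?thesis
    by (simp add: Bc_def)
qed

lemma Bn_le_B: "real (Bn n) \<le> B"
  using X_nonneg by (simp add: Bc_def)

lemma B_ge_1: "B \<ge> 1"
  using Bn_ge_1[OF n_ge_1] Bn_le_B by linarith

lemma a_le_B:
  assumes "i < t" and "j \<in> {1..3*n}"
  shows "real (a i j) \<le> 3 * B"
proof -
  have "real (a i j) \<le> 3 * real (Bn n)"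
    using Atilde_le_3_Bn[OF a_in_Atilde[OF assms]] by simp
  then show ?thesis
    using Bn_le_B by linarith
qed

lemma Y_eq: "Y = 3 * t^2 * n * B"
  by (simp add: Yc_def)

lemma tB_le_Y: "(3 * t + 1) * B \<le> Y"
proof -
  have "2 * 1 \<le> t * real n"
    using t_ge_2 n_ge_1 by (intro mult_mono) auto
  then have "3 * real t * 2 \<le> 3 * real t * (t * real n)"
    by (intro mult_left_mono) auto
  then have "3 * real t + 1 \<le> 3 * t * (t * real n)"
    using t_ge_2 by linarith
  then show ?thesis
    using B_ge_1 by (simp add: Y_eq power2_eq_square mult_right_mono mult.assoc)
qed

lemma Y_ge_7: "Y \<ge> 7"
proof -
  have "7 * 1 \<le> (3 * t + 1) * B"
    using t_ge_2 B_ge_1 by (intro mult_mono) auto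
  then show ?thesis
    using tB_le_Y by linarith
qed

lemma K_ge_3: "K \<ge> 3"
proof -
  have "(3::real)^1 \<le> 3^(L^2)"
    using L_ge_1 by (intro power_increasing) auto
  then show ?thesis
    by simp
qed

lemma pow3_f_le:
  assumes "k < L" and "l < L"
  shows "(3::real)^(f k l) \<le> K"
  using f_less[OF assms] by (intro power_increasing) auto

lemma KY_pos: "K * Y > 0"
  using Y_ge_7 by simp

lemma KY_le_LKY: "K * Y \<le> L * (K * Y)"
  using L_ge_1 KY_pos mult_right_mono[of 1 "real L" "K * Y"] by simp

lemma LKY_lt_Z: "3 * (L * (K * Y)) < Z"
proof -
  have "1 * 7 \<le> real L * Y"
    using L_ge_1 Y_ge_7 by (intro mult_mono) auto
  then have "3 * (L * (K * Y)) < (L * Y) * (L * (K * Y))"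
    using KY_pos L_ge_1 by (intro mult_strict_right_mono) auto
  also have "\<dots> = Z"
    by (simp add: Zc_def power2_eq_square mult_ac)
  finally show ?thesis .
qed

lemma Z_pos: "Z > 0"
  using LKY_lt_Z KY_le_LKY KY_pos by linarith

lemma wt_nonneg: "0 \<le> wt n t L a f x"
  using X_nonneg B_ge_1 Y_ge_7 Z_pos
  by (cases x) (auto intro!: add_nonneg_nonneg mult_nonneg_nonneg sum_nonneg)

lemma wt_le_pr: "wt n t L a f x \<le> pr n t L a f x"
  by (cases x) (auto simp: Bc_def Xc_def)

lemma pr_Xit_le:
  assumes "i < t" and "j \<in> {1..3*n}"
  shows "pr n t L a f (Xit i j) \<le> Y"
proof -
  have "real i * B \<le> (real t - 1) * B"
    using assms(1) B_ge_1 by (intro mult_right_mono) auto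
  then have "X + a i j + 3 * i * B \<le> B + 3 * B + 3 * ((real t - 1) * B)"
    using X_le_B a_le_B[OF assms] by simp
  also have "\<dots> = (3 * t + 1) * B"
    by (simp add: algebra_simps)
  finally show ?thesis
    using tB_le_Y by simp
qed

lemma three_Y_le_KY: "3 * Y \<le> K * Y"
  using K_ge_3 Y_ge_7 by (intro mult_right_mono) auto

lemma pow3_f_Y_le: "k < L \<Longrightarrow> l < L \<Longrightarrow> 3^(f k l) * Y \<le> K * Y"
  using pow3_f_le Y_ge_7 by (intro mult_right_mono) auto

lemma pr_Y11_le:
  assumes "k < L" and "l < L"
  shows "pr n t L a f (Y11 k l) \<le> 3 * (K * Y)"
proof -
  have nB: "0 \<le> real n * B"
    using B_ge_1 by simp
  have Y_nB: "Y = 3 * (t^2 * (n * B))"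
    by (simp add: Y_eq)
  show ?thesis
  proof (cases "k = l")
    case True
    have "(2::real)^(2*k) \<le> t^2"
      using two_pow_le_t[OF assms(1)] by (simp add: power_mult power_mono mult.commute[of 2 k])
    then have "2^(2*k) * (n * B) \<le> t^2 * (n * B)"
      using nB by (rule mult_right_mono)
    moreover have "(2::real)^k \<le> t^2"
      using two_pow_le_t[OF assms(1)] t_ge_2
      by (simp add: power2_eq_square order_trans[OF _ mult_right_mono[of 1]])
    then have "2^k * (n * B) \<le> t^2 * (n * B)"
      using nB by (rule mult_right_mono)
    moreover have "pr n t L a f (Y11 k l) = 3^(f k k) * Y + 4.5 * (2^(2*k) * (n * B)) + 1.5 * (2^k * (n * B))"
      using True by (simp add: algebra_simps)
    ultimately show ?thesis
      using pow3_f_Y_le[OF assms(1,1)] three_Y_le_KY Y_nB Y_ge_7 by linarith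
  next
    case False
    have "(2::real)^(k+l) \<le> t^2"
      using mult_mono[OF two_pow_le_t[OF assms(1)] two_pow_le_t[OF assms(2)]]
      by (simp add: power_add power2_eq_square)
    then have "2^(k+l) * (n * B) \<le> t^2 * (n * B)"
      using nB by (rule mult_right_mono)
    moreover have "pr n t L a f (Y11 k l) = 3^(f k l) * Y + 3^(f l k) * Y + 9 * (2^(k+l) * (n * B))"
      using False by (simp add: algebra_simps)
    ultimately show ?thesis
      using pow3_f_Y_le[OF assms] pow3_f_Y_le[OF assms(2,1)] three_Y_le_KY Y_nB Y_ge_7 by linarith
  qed
qed

lemma pr_lt_Z:
  assumes "x \<in> Xset n t \<union> Yset L"
  shows "pr n t L a f x < Z"
proof -
  have "pr n t L a f x \<le> 3 * (K * Y)"
    using assms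
  proof (cases x)
    case (Xit i j)
    with assms have "i < t" "j \<in> {1..3*n}"
      by (auto simp: Xset_def Yset_def)
    then have "pr n t L a f x \<le> Y"
      using Xit pr_Xit_le by simp
    then show ?thesis
      using three_Y_le_KY Y_ge_7 by linarith
  next
    case (Y10 k l)
    then show ?thesis
      using assms pow3_f_Y_le[of k l] KY_pos by (auto simp: Xset_def Yset_def)
  next
    case (Y01 k l)
    then show ?thesis
      using assms pow3_f_Y_le[of l k] KY_pos by (auto simp: Xset_def Yset_def)
  next
    case (Y11 k l)
    then show ?thesis
      using assms pr_Y11_le by (auto simp: Xset_def Yset_def)
  qed (use assms in \<open>auto simp: Xset_def Yset_def\<close>)
  then show ?thesis
    using KY_le_LKY LKY_lt_Z by linarith
qed

lemma wt_Zit_bounds: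
  assumes "d \<in> {0, 1}" and "k < L"
  shows "2^k * Z \<le> wt n t L a f (Zit d k) \<and> wt n t L a f (Zit d k) < (2^k + 1) * Z"
proof -
  obtain r where wt: "wt n t L a f (Zit d k) = 2^k * Z + r" and r: "0 \<le> r" "r \<le> L * (K * Y)"
  proof (cases "d = 0")
    case True
    have "(\<Sum>l<L. 3^(f k l) * Y) \<le> (\<Sum>l<L. K * Y)"
      using pow3_f_Y_le[OF assms(2)] by (intro sum_mono) auto
    then show ?thesis
      using that True Y_ge_7 by (simp add: sum_nonneg)
  next
    case False
    have "2^k * 3 \<le> 3 * real t + 1"
      using two_pow_le_t[OF assms(2)] by linarith
    then have "2^k * 3 * B \<le> (3 * t + 1) * B"
      using B_ge_1 by (intro mult_right_mono) auto
    show ?thesis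
    proof (rule that)
      show "wt n t L a f (Zit d k) = 2^k * Z + 2^k * 3 * B"
        using False assms(1) by simp
      show "0 \<le> 2^k * 3 * B"
        using B_ge_1 by simp
      show "2^k * 3 * B \<le> L * (K * Y)"
        using \<open>2^k * 3 * B \<le> (3 * t + 1) * B\<close> tB_le_Y three_Y_le_KY KY_le_LKY Y_ge_7
        by linarith
    qed
  qed
  then show ?thesis
    using LKY_lt_Z KY_pos by (simp add: distrib_right)
qed

lemma floor_wt_eq_0: "x \<in> Xset n t \<union> Yset L \<Longrightarrow> \<lfloor>wt n t L a f x / Z\<rfloor> = 0"
  using floor_divide_eqI[of Z 0 "wt n t L a f x"] Z_pos wt_nonneg[of x] wt_le_pr[of x] pr_lt_Z[of x]
  by simp

lemma floor_pr_eq_0: "x \<in> Xset n t \<union> Yset L \<Longrightarrow> \<lfloor>pr n t L a f x / Z\<rfloor> = 0"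
  using floor_divide_eqI[of Z 0 "pr n t L a f x"] Z_pos wt_nonneg[of x] wt_le_pr[of x] pr_lt_Z[of x]
  by simp

lemma floor_wt_Zit: "d \<in> {0, 1} \<Longrightarrow> k < L \<Longrightarrow> \<lfloor>wt n t L a f (Zit d k) / Z\<rfloor> = 2^k"
  using floor_divide_eqI[of Z "2^k"] Z_pos wt_Zit_bounds by simp

lemma floor_pr_Zit: "d \<in> {0, 1} \<Longrightarrow> k < L \<Longrightarrow> \<lfloor>pr n t L a f (Zit d k) / Z\<rfloor> = 2^k"
  using floor_wt_Zit by simp

lemma Int_Zset_eq_Zi_if_wZ_pZ:
  assumes S: "S \<subseteq> Xset n t \<union> Yset L \<union> Zset L"
    and wZ: "wZ n t L a f S \<le> int t - 1" and pZ: "pZ n t L a f S \<ge> int t - 1"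
  shows "\<exists>i\<in>{0..<t}. S \<inter> Zset L = Zi L i"
proof -
  have "finite S"
    using S finite_Xset finite_Yset finite_Zset by (meson finite_Un finite_subset)
  have "wZ n t L a f S = (\<Sum>k<L. int (zcount S k) * 2^k)"
    unfolding wZ_def using \<open>finite S\<close> S floor_wt_eq_0 floor_wt_Zit by (rule sum_eq_sum_zcount)
  moreover have "pZ n t L a f S = (\<Sum>k<L. int (zcount S k) * 2^k)"
    unfolding pZ_def using \<open>finite S\<close> S floor_pr_eq_0 floor_pr_Zit by (rule sum_eq_sum_zcount)
  ultimately have "(\<Sum>k<L. int (zcount S k) * 2^k) = int t - 1"
    using wZ pZ by linarith
  then have "int ((\<Sum>k<L. zcount S k * 2^k) + 1) = int (2^L)"
    using t_eq by simp
  then have digits: "(\<Sum>k<L. zcount S k * 2^k) + 1 = 2^L"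
    by (simp only: of_nat_eq_iff)
  have "zcount S k = 1" if "k < L" for k
    using zcount_le_2 digits that by (rule digits_eq_1_if_sum_eq_mask)
  then have "S \<inter> Zset L = Zi L (horner_sum of_bool 2 (map (\<lambda>k. Zit 1 k \<in> S) [0..<L]))"
    by (rule Int_Zset_eq_Zi)
  moreover have "horner_sum of_bool 2 (map (\<lambda>k. Zit 1 k \<in> S) [0..<L]) < t"
    using horner_sum_of_bool_2_less[of "map (\<lambda>k. Zit 1 k \<in> S) [0..<L]"] t_eq by simp
  ultimately show ?thesis
    by auto
qed

end

theorem lemma5:
  fixes n t L :: nat and a f :: "nat \<Rightarrow> nat \<Rightarrow> nat" and S :: "item set"
  assumes "n \<ge> 1"
    and "t = 2^L"
    and "\<And>i. i < t \<Longrightarrow> card (a i ` {1..3*n}) = 3*n"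
    and "\<And>i. i < t \<Longrightarrow> a i ` {1..3*n} \<subseteq> Atilde n"
    and "\<And>i. i < t \<Longrightarrow> (\<Sum>j=1..3*n. a i j) = 3 * Bn n"
    and "bij_betw (\<lambda>(k, l). f k l) ({0..<L} \<times> {0..<L}) {0..<L^2}"
    and "S \<subseteq> Xset n t \<union> Yset L \<union> Zset L"
    and "wZ n t L a f S \<le> int t - 1"
    and "pZ n t L a f S \<ge> int t - 1"
  shows "\<exists>i\<in>{0..<t}. S \<inter> Zset L = Zi L i"
proof (cases "L = 0")
  case True
  then show ?thesis
    using assms(2) by (auto simp: Zset_def Zi_def)
next
  case False
  interpret reduction n t L a f
  proof
    show "\<And>i j. i < t \<Longrightarrow> j \<in> {1..3*n} \<Longrightarrow> a i j \<in> Atilde n"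
      using assms(4) by blast
    show "\<And>k l. k < L \<Longrightarrow> l < L \<Longrightarrow> f k l < L^2"
      using bij_betw_apply[OF assms(6)] by fastforce
  qed (use assms(1,2) False in auto)
  show ?thesis
    using assms(7-9) by (rule Int_Zset_eq_Zi_if_wZ_pZ)
qed

end
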